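(* Let $k\ge 3$ and let $\varepsilon\in(0,1)$ with $1/\varepsilon>k$. Let $m\in\mathbb{N}$ satisfy $1/m<\varepsilon\le 1/(m-1)$ and put $N=m^2$. Let $E\subseteq[0,1]$ be a set that $\varepsilon$-avoids $k$APs. Then for every $j\ge 0$ and every $N$-adic interval $I=[iN^{-j},(i+1)N^{-j})$, the number of $N$-adic subintervals of $I$ of length $N^{-j-1}$ that intersect $E$ is strictly less than $m\,(r_k(m)+1)$.
   Context: A $k$-term arithmetic progression ($k$AP) is a set $P=\{x, x+\lambda, \dots, x+(k-1)\lambda\}\subset\mathbb{R}$ with $\lambda>0$, called the gap length of $P$. For $M\in\mathbb{N}$, $r_k(M)$ denotes the maximal cardinality of a subset of $\{1,\dots,M\}$ containing no $k$AP. A set $E\subset\mathbb{R}$ $\varepsilon$-avoids $k$APs if for every $k$AP $P$ with gap length $\lambda$ one has $\sup_{p\in P}\inf_{x\in E}|x-p|\ge\varepsilon\lambda$. *)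

theory Defs
  imports "HOL-Analysis.Analysis"
begin

definition has_kAP_nat :: "nat \<Rightarrow> nat set \<Rightarrow> bool" where
  "has_kAP_nat k A \<longleftrightarrow> (\<exists>a d. d > 0 \<and> (\<forall>t<k. a + t * d \<in> A))"

definition r_AP :: "nat \<Rightarrow> nat \<Rightarrow> nat" where
  "r_AP k M = Max {card A | A. A \<subseteq> {1..M} \<and> \<not> has_kAP_nat k A}"

definition kAP :: "nat \<Rightarrow> real \<Rightarrow> real \<Rightarrow> real set" where
  "kAP k x d = {x + real t * d | t. t < k}"

definition eps_avoids_kAPs :: "real \<Rightarrow> nat \<Rightarrow> real set \<Rightarrow> bool" where
  "eps_avoids_kAPs \<epsilon> k E \<longleftrightarrow>
     (\<forall>x d. d > 0 \<longrightarrow> Sup ((\<lambda>p. infdist p E) ` kAP k x d) \<ge> \<epsilon> * d)"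

definition nadic_interval :: "nat \<Rightarrow> nat \<Rightarrow> int \<Rightarrow> real set" where
  "nadic_interval N j i = {real_of_int i / real N ^ j ..< real_of_int (i + 1) / real N ^ j}"

end

theory Submission
  imports Defs
begin

text \<open>Split the N-adic subintervals of I, N = m^2, into m residue classes mod m, each consisting of
  m positions spaced m cells apart. Within one class the occupied positions form a subset of
  {1..m}; a kAP among them would give a kAP of gap at least m/N^(j+1) each of whose points lies
  within 1/N^(j+1) < \<epsilon> m/N^(j+1) of E, contradicting \<epsilon>-avoidance. So each class contributes at
  most r_k(m) occupied subintervals, and in total at most m r_k(m) < m (r_k(m) + 1).\<close>

lemma Sup_infdist_kAP_less:
  assumes "k > 0" and "\<And>t. t < k \<Longrightarrow> infdist (x + real t * d) E < \<delta>"
  shows "Sup ((\<lambda>p. infdist p E) ` kAP k x d) < \<delta>"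
proof -
  have kAP_eq: "kAP k x d = (\<lambda>t. x + real t * d) ` {..<k}"
    by (auto simp: kAP_def)
  have "Sup ((\<lambda>p. infdist p E) ` kAP k x d) = Max ((\<lambda>p. infdist p E) ` kAP k x d)"
    using assms(1) by (intro cSup_eq_Max) (auto simp: kAP_eq)
  also have "\<dots> < \<delta>"
    using assms by (subst Max_less_iff) (auto simp: kAP_eq)
  finally show ?thesis .
qed

lemma no_kAP_of_occupied_cells:
  fixes b h \<delta> \<epsilon> :: real and T :: "nat set"
  assumes avoid: "eps_avoids_kAPs \<epsilon> k E" and "k > 0" and "h > 0" and "\<delta> < \<epsilon> * h"
    and occupied: "\<And>a. a \<in> T \<Longrightarrow> \<exists>y\<in>E. b + real a * h \<le> y \<and> y < b + real a * h + \<delta>"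
  shows "\<not> has_kAP_nat k T"
proof
  assume "has_kAP_nat k T"
  then obtain a d where "d > 0" and AP: "\<And>t. t < k \<Longrightarrow> a + t * d \<in> T"
    by (auto simp: has_kAP_nat_def)
  define x where "x = b + real a * h"
  define l where "l = real d * h"
  have near: "infdist (x + real t * l) E < \<delta>" if "t < k" for t
  proof -
    have "a + t * d \<in> T" using AP \<open>t < k\<close> .
    then obtain y where "y \<in> E" and y: "b + real (a + t * d) * h \<le> y" "y < b + real (a + t * d) * h + \<delta>"
      using occupied by blast
    have "b + real (a + t * d) * h = x + real t * l"
      by (simp add: x_def l_def algebra_simps)
    then have "dist (x + real t * l) y < \<delta>"
      using y by (simp add: dist_real_def)
    then show ?thesis
      using infdist_le[OF \<open>y \<in> E\<close>, of "x + real t * l"] by linarith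
  qed
  then have "infdist x E < \<delta>"
    using \<open>k > 0\<close> by (metis add_0_right mult_zero_left of_nat_0)
  then have "0 < \<epsilon> * h"
    using infdist_nonneg[of x E] \<open>\<delta> < \<epsilon> * h\<close> by linarith
  then have "\<epsilon> > 0"
    using \<open>h > 0\<close> by (simp add: zero_less_mult_iff)
  have "\<delta> < \<epsilon> * h" by fact
  also have "\<dots> \<le> \<epsilon> * l"
    using \<open>d > 0\<close> \<open>h > 0\<close> \<open>\<epsilon> > 0\<close> by (simp add: l_def)
  also have "\<dots> \<le> Sup ((\<lambda>p. infdist p E) ` kAP k x l)"
    using avoid \<open>d > 0\<close> \<open>h > 0\<close> unfolding eps_avoids_kAPs_def l_def by simp
  also have "\<dots> < \<delta>"
    using \<open>k > 0\<close> near by (rule Sup_infdist_kAP_less)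
  finally show False .
qed

lemma card_le_r_AP:
  assumes "T \<subseteq> {1..M}" and "\<not> has_kAP_nat k T"
  shows "card T \<le> r_AP k M"
proof -
  have "{card A | A. A \<subseteq> {1..M} \<and> \<not> has_kAP_nat k A} = card ` {A. A \<subseteq> {1..M} \<and> \<not> has_kAP_nat k A}"
    by auto
  moreover have "finite {A. A \<subseteq> {1..M} \<and> \<not> has_kAP_nat k A}"
    by (rule finite_subset[of _ "Pow {1..M}"]) auto
  ultimately show ?thesis
    unfolding r_AP_def using assms by (auto intro!: Max_ge)
qed

lemma nadic_interval_eq:
  "nadic_interval N n i = {of_int i / real N ^ n ..< of_int i / real N ^ n + 1 / real N ^ n}"
  by (simp add: nadic_interval_def add_divide_distrib)

lemma nadic_subinterval_index:
  assumes "N > 0" and "nadic_interval N (Suc n) i' \<subseteq> nadic_interval N n i"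
  shows "i' \<in> {i * int N ..< (i + 1) * int N}"
proof -
  have "of_int i' / real N ^ Suc n \<in> nadic_interval N (Suc n) i'"
    using assms(1) by (simp add: nadic_interval_eq)
  then have "of_int i / real N ^ n \<le> of_int i' / real N ^ Suc n"
    and "of_int i' / real N ^ Suc n < of_int (i + 1) / real N ^ n"
    using assms(2) by (auto simp: nadic_interval_def)
  then have "real_of_int (i * int N) \<le> of_int i'" and "of_int i' < real_of_int ((i + 1) * int N)"
    using assms(1) by (simp_all add: field_simps)
  then show ?thesis by (simp only: of_int_le_iff of_int_less_iff atLeastLessThan_iff)
qed

lemma card_occupied_cells_in_progression:
  assumes avoid: "eps_avoids_kAPs \<epsilon> k E" and "k > 0" and "N > 0" and "1 < \<epsilon> * real m"
  shows "card {q \<in> {1..m}. nadic_interval N n (a + int m * int q) \<inter> E \<noteq> {}} \<le> r_AP k m"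
proof (rule card_le_r_AP)
  define \<delta> :: real where "\<delta> = 1 / real N ^ n"
  have "\<delta> > 0" using \<open>N > 0\<close> by (simp add: \<delta>_def)
  have "real m > 0" using \<open>1 < \<epsilon> * real m\<close> by (cases "m = 0") auto
  show "\<not> has_kAP_nat k {q \<in> {1..m}. nadic_interval N n (a + int m * int q) \<inter> E \<noteq> {}}"
  proof (rule no_kAP_of_occupied_cells[OF avoid \<open>k > 0\<close>, where b = "of_int a * \<delta>" and h = "real m * \<delta>"])
    show "real m * \<delta> > 0" using \<open>\<delta> > 0\<close> \<open>real m > 0\<close> by simp
    show "\<delta> < \<epsilon> * (real m * \<delta>)"
      using \<open>\<delta> > 0\<close> \<open>1 < \<epsilon> * real m\<close> by (simp add: mult.assoc[symmetric])
    fix q assume "q \<in> {q \<in> {1..m}. nadic_interval N n (a + int m * int q) \<inter> E \<noteq> {}}"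
    moreover have "of_int (a + int m * int q) / real N ^ n = of_int a * \<delta> + real q * (real m * \<delta>)"
      by (simp add: \<delta>_def add_divide_distrib)
    ultimately show "\<exists>y\<in>E. of_int a * \<delta> + real q * (real m * \<delta>) \<le> y
                  \<and> y < of_int a * \<delta> + real q * (real m * \<delta>) + \<delta>"
      by (auto simp: nadic_interval_eq \<delta>_def)
  qed
qed auto

lemma card_le_sum_residue_classes:
  fixes S :: "int set" and b :: int and m :: nat
  assumes "S \<subseteq> {b ..< b + int m * int m}"
  shows "card S \<le> (\<Sum>c<m. card {q \<in> {1..m}. b + int c + int m * (int q - 1) \<in> S})"
proof -
  define pos where "pos c q = b + int c + int m * (int q - 1)" for c q :: nat
  define C where "C c = {q \<in> {1..m}. pos c q \<in> S}" for c
  have "S \<subseteq> (\<Union>c<m. pos c ` C c)"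
  proof
    fix s assume "s \<in> S"
    define t where "t = nat (s - b)"
    have "b \<le> s" and "s < b + int m * int m" using \<open>s \<in> S\<close> assms by auto
    then have "t < m * m" and s_eq: "s = b + int t" by (simp_all add: t_def nat_less_iff)
    then have "m > 0" by (cases "m = 0") auto
    have "t div m < m" using \<open>t < m * m\<close> \<open>m > 0\<close> by (simp add: div_less_iff_less_mult)
    moreover have "t mod m < m" using \<open>m > 0\<close> by simp
    moreover have "pos (t mod m) (t div m + 1) = s"
      unfolding pos_def s_eq using div_mult_mod_eq[of t m] by (simp add: algebra_simps flip: of_nat_mult of_nat_add)
    ultimately show "s \<in> (\<Union>c<m. pos c ` C c)"
      using \<open>s \<in> S\<close> by (force simp: C_def)
  qed
  then have "card S \<le> card (\<Union>c<m. pos c ` C c)"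
    by (intro card_mono) (auto simp: C_def)
  also have "\<dots> \<le> (\<Sum>c<m. card (pos c ` C c))" by (rule card_UN_le) simp
  also have "\<dots> \<le> (\<Sum>c<m. card (C c))" by (intro sum_mono card_image_le) (simp add: C_def)
  finally show ?thesis by (simp add: C_def pos_def)
qed

lemma card_occupied_subintervals_le:
  assumes avoid: "eps_avoids_kAPs \<epsilon> k E" and "k > 0" and "1 < \<epsilon> * real m"
  shows "card {J. (\<exists>i'. J = nadic_interval (m^2) (n + 1) i')
                  \<and> J \<subseteq> nadic_interval (m^2) n i \<and> J \<inter> E \<noteq> {}}
         \<le> m * r_AP k m"
proof -
  define N where "N = m^2"
  have "N > 0" using \<open>1 < \<epsilon> * real m\<close> by (cases "m = 0") (auto simp: N_def)
  define cell where "cell i' = nadic_interval N (n + 1) i'" for i'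
  define S where "S = {i' \<in> {i * int N ..< (i + 1) * int N}. cell i' \<inter> E \<noteq> {}}"
  have "finite S"
    by (rule finite_subset[of _ "{i * int N ..< (i + 1) * int N}"]) (auto simp: S_def)
  have "{J. (\<exists>i'. J = nadic_interval (m^2) (n + 1) i') \<and> J \<subseteq> nadic_interval (m^2) n i \<and> J \<inter> E \<noteq> {}}
      \<subseteq> cell ` S"
    using nadic_subinterval_index[OF \<open>N > 0\<close>] by (auto simp: S_def cell_def N_def)
  then have "card {J. (\<exists>i'. J = nadic_interval (m^2) (n + 1) i') \<and> J \<subseteq> nadic_interval (m^2) n i \<and> J \<inter> E \<noteq> {}}
      \<le> card S"
    using card_mono[OF finite_imageI[OF \<open>finite S\<close>]] card_image_le[OF \<open>finite S\<close>, of cell]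
    by (meson order_trans)
  also have "\<dots> \<le> (\<Sum>c<m. card {q \<in> {1..m}. i * int N + int c + int m * (int q - 1) \<in> S})"
    by (rule card_le_sum_residue_classes) (auto simp: S_def N_def power2_eq_square algebra_simps)
  also have "\<dots> \<le> (\<Sum>c<m. r_AP k m)"
  proof (intro sum_mono)
    fix c
    have "card {q \<in> {1..m}. i * int N + int c + int m * (int q - 1) \<in> S}
        \<le> card {q \<in> {1..m}. cell (i * int N + int c - int m + int m * int q) \<inter> E \<noteq> {}}"
      by (rule card_mono) (auto simp: S_def algebra_simps)
    also have "\<dots> \<le> r_AP k m"
      unfolding cell_def using assms \<open>N > 0\<close> by (intro card_occupied_cells_in_progression)
    finally show "card {q \<in> {1..m}. i * int N + int c + int m * (int q - 1) \<in> S} \<le> r_AP k m" .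
  qed
  finally show ?thesis by simp
qed

theorem mainTheorem10:
  fixes k m :: nat and \<epsilon> :: real and E :: "real set"
  assumes "k \<ge> 3"
    and "0 < \<epsilon>" and "\<epsilon> < 1" and "1 / \<epsilon> > real k"
    and "1 / real m < \<epsilon>" and "\<epsilon> \<le> 1 / (real m - 1)"
    and "E \<subseteq> {0..1}"
    and "eps_avoids_kAPs \<epsilon> k E"
  shows "\<forall>(j::nat) (i::int).
           card {J. (\<exists>i'. J = nadic_interval (m^2) (j + 1) i')
                    \<and> J \<subseteq> nadic_interval (m^2) j i \<and> J \<inter> E \<noteq> {}}
           < m * (r_AP k m + 1)"
proof (intro allI)
  fix j :: nat and i :: int
  have "m \<noteq> 0" and "m \<noteq> 1"
    using assms(2,6) by (cases "m = 0", simp_all, cases "m = 1", simp_all)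
  then have "m \<ge> 2" by linarith
  then have "1 < \<epsilon> * real m"
    using assms(5) by (simp add: field_simps)
  then have "card {J. (\<exists>i'. J = nadic_interval (m^2) (j + 1) i')
                    \<and> J \<subseteq> nadic_interval (m^2) j i \<and> J \<inter> E \<noteq> {}} \<le> m * r_AP k m"
    using assms(1,8) by (intro card_occupied_subintervals_le) auto
  also have "\<dots> < m * (r_AP k m + 1)"
    using \<open>m \<ge> 2\<close> by simp
  finally show "card {J. (\<exists>i'. J = nadic_interval (m^2) (j + 1) i')
                    \<and> J \<subseteq> nadic_interval (m^2) j i \<and> J \<inter> E \<noteq> {}} < m * (r_AP k m + 1)" .
qed

end
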